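(* Let $A$ be a commutative ring. The graph $\Gamma(A)$ contains $4$-cliques if and only if the set $\{u\in A^\times\mid 1-u\in A^\times\}$ is non-empty.
   Context: A unimodular row over $A$ is $(a,b)\in A^2$ with $aA+bA=A$. $\Gamma(A)$ is the graph whose vertices are classes of unimodular rows modulo multiplication by units, with $\{[u],[v]\}$ an edge iff the matrix with rows $u,v$ lies in $\mathrm{GL}_2(A)$. A $4$-clique is a set of four distinct pairwise adjacent vertices. *)

theory Defs
  imports Main
begin

definition unimodular :: "'a::comm_ring_1 \<times> 'a \<Rightarrow> bool" where
  "unimodular r \<longleftrightarrow> (\<exists>x y. fst r * x + snd r * y = 1)"

definition unit_equiv :: "('a::comm_ring_1 \<times> 'a) rel" where
  "unit_equiv = {(p :: 'a \<times> 'a, q). unimodular p \<and> unimodular q \<and>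
      (\<exists>u. u dvd 1 \<and> fst q = u * fst p \<and> snd q = u * snd p)}"

definition Gamma_vertices :: "('a::comm_ring_1 \<times> 'a) set set" where
  "Gamma_vertices = {r. unimodular r} // unit_equiv"

definition det2 :: "'a::comm_ring_1 \<times> 'a \<Rightarrow> 'a \<times> 'a \<Rightarrow> 'a" where
  "det2 p q = fst p * snd q - snd p * fst q"

(* Edge {[u],[v]}: the matrix with rows u, v lies in GL_2(A), i.e. its determinant is a unit
   (independent of the chosen representatives). *)
definition Gamma_edge :: "('a::comm_ring_1 \<times> 'a) set \<Rightarrow> ('a \<times> 'a) set \<Rightarrow> bool" where
  "Gamma_edge X Y \<longleftrightarrow> X \<in> Gamma_vertices \<and> Y \<in> Gamma_vertices \<and>
      (\<exists>u\<in>X. \<exists>v\<in>Y. (det2 u v) dvd 1)"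

definition Gamma_4clique :: "('a::comm_ring_1 \<times> 'a) set set \<Rightarrow> bool" where
  "Gamma_4clique S \<longleftrightarrow> S \<subseteq> Gamma_vertices \<and> card S = 4 \<and>
      (\<forall>X\<in>S. \<forall>Y\<in>S. X \<noteq> Y \<longrightarrow> Gamma_edge X Y)"

end

theory Submission
  imports Defs
begin

(* A 4-clique of \<Gamma>(A) is the same as four rows whose 2x2 minors [ij] are all units (distinctness
   of the classes is automatic, since [ii] = 0 is never a unit).  For such rows the Pluecker relation
   [12][34] = [13][24] - [14][23] shows that u = [14][23] / ([13][24]) and 1 - u = [12][34] / ([13][24])
   are both units.  Conversely, if u and 1 - u are units, the rows (1,0), (0,1), (1,1), (1,u) have
   minors 1, 1, u, -1, 1, u - 1. *)

lemma is_unit_mult: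
  fixes a b :: "'a::comm_semiring_1"
  shows "a dvd 1 \<Longrightarrow> b dvd 1 \<Longrightarrow> a * b dvd 1"
  using mult_dvd_mono[of a 1 b 1] by simp

lemma card_4_iff:
  "card S = 4 \<longleftrightarrow> (\<exists>a b c d. S = {a, b, c, d} \<and> distinct [a, b, c, d])"
proof
  assume "card S = 4"
  then obtain a T where "S = insert a T" "a \<notin> T" "card T = 3"
    using card_eq_SucD[of S 3] by auto
  then show "\<exists>a b c d. S = {a, b, c, d} \<and> distinct [a, b, c, d]"
    by (auto simp: card_3_iff)
next
  assume "\<exists>a b c d. S = {a, b, c, d} \<and> distinct [a, b, c, d]"
  then show "card S = 4" by auto
qed

lemma det2_pluecker:
  "det2 p1 p2 * det2 p3 p4 = det2 p1 p3 * det2 p2 p4 - det2 p1 p4 * det2 p2 p3"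
  by (simp add: det2_def algebra_simps)

definition row_class :: "'a::comm_ring_1 \<times> 'a \<Rightarrow> ('a \<times> 'a) set" where
  "row_class p = unit_equiv `` {p}"

lemma unimodular_if_det2_unit:
  assumes "det2 p q dvd 1"
  shows "unimodular p"
proof -
  from assms obtain w where "1 = det2 p q * w" by (auto elim: dvdE)
  then have "fst p * (snd q * w) + snd p * (- fst q * w) = 1"
    by (simp add: det2_def algebra_simps)
  then show ?thesis unfolding unimodular_def by blast
qed

lemma unit_equiv_refl: "unimodular p \<Longrightarrow> (p, p) \<in> unit_equiv"
  unfolding unit_equiv_def by (auto intro: exI[of _ 1])

lemma row_class_in_Gamma_vertices: "unimodular p \<Longrightarrow> row_class p \<in> Gamma_vertices"
  unfolding Gamma_vertices_def row_class_def by (rule quotientI) simp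

lemma Gamma_verticesE:
  assumes "X \<in> Gamma_vertices"
  obtains p where "unimodular p" "X = row_class p"
  using assms unfolding Gamma_vertices_def row_class_def by (rule quotientE) simp

lemma det2_dvd_det2_if_unit_equiv:
  assumes "(p, p') \<in> unit_equiv" "(q, q') \<in> unit_equiv"
  shows "det2 p q dvd det2 p' q'"
proof -
  from assms obtain c e where "fst p' = c * fst p" "snd p' = c * snd p"
    and "fst q' = e * fst q" "snd q' = e * snd q"
    unfolding unit_equiv_def by auto
  then have "det2 p' q' = det2 p q * (c * e)"
    unfolding det2_def by (simp add: algebra_simps)
  then show ?thesis by simp
qed

lemma Gamma_edge_row_class_iff:
  assumes "unimodular p" "unimodular q"
  shows "Gamma_edge (row_class p) (row_class q) \<longleftrightarrow> det2 p q dvd 1"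
proof
  assume "Gamma_edge (row_class p) (row_class q)"
  then obtain p' q' where "p' \<in> row_class p" "q' \<in> row_class q" and unit: "det2 p' q' dvd 1"
    unfolding Gamma_edge_def by blast
  then have "det2 p q dvd det2 p' q'"
    unfolding row_class_def by (intro det2_dvd_det2_if_unit_equiv) simp_all
  then show "det2 p q dvd 1" using unit by (rule dvd_trans)
next
  assume "det2 p q dvd 1"
  moreover have "p \<in> row_class p" "q \<in> row_class q"
    using assms by (simp_all add: row_class_def unit_equiv_refl)
  moreover have "row_class p \<in> Gamma_vertices" "row_class q \<in> Gamma_vertices"
    using assms by (simp_all add: row_class_in_Gamma_vertices)
  ultimately show "Gamma_edge (row_class p) (row_class q)"
    unfolding Gamma_edge_def by blast
qed

lemma Gamma_edge_irrefl: "\<not> Gamma_edge X X"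
proof
  assume edge: "Gamma_edge X X"
  then obtain p where "unimodular p" "X = row_class p"
    unfolding Gamma_edge_def by (auto elim: Gamma_verticesE)
  with edge have "det2 p p dvd 1" by (simp add: Gamma_edge_row_class_iff)
  then show False by (simp add: det2_def mult.commute)
qed

lemma row_class_inj_on:
  assumes "pairwise (\<lambda>p q. det2 p q dvd 1) R"
  shows "inj_on row_class R"
proof (rule inj_onI, rule ccontr)
  fix p q assume "p \<in> R" "q \<in> R" "row_class p = row_class q" "p \<noteq> q"
  with assms have "det2 p q dvd 1" "det2 q p dvd 1" by (auto dest: pairwiseD)
  then have "Gamma_edge (row_class p) (row_class q)"
    by (simp add: Gamma_edge_row_class_iff unimodular_if_det2_unit)
  with \<open>row_class p = row_class q\<close> show False by (simp add: Gamma_edge_irrefl)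
qed

lemma Gamma_4clique_rowsE:
  assumes clique: "Gamma_4clique S"
  obtains R where "card R = 4" "pairwise (\<lambda>p q. det2 p q dvd 1) R" "S = row_class ` R"
proof -
  have "\<forall>X\<in>S. \<exists>p. unimodular p \<and> X = row_class p"
    using clique unfolding Gamma_4clique_def by (metis Gamma_verticesE subsetD)
  then obtain rep where rep: "\<And>X. X \<in> S \<Longrightarrow> unimodular (rep X) \<and> X = row_class (rep X)"
    by metis
  have "inj_on rep S" by (metis inj_onI rep)
  then have "card (rep ` S) = 4" using clique by (simp add: Gamma_4clique_def card_image)
  moreover have "pairwise (\<lambda>p q. det2 p q dvd 1) (rep ` S)"
  proof (rule pairwise_imageI)
    fix X Y assume "X \<in> S" "Y \<in> S" "X \<noteq> Y"
    with clique have "Gamma_edge X Y" unfolding Gamma_4clique_def by blast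
    with rep \<open>X \<in> S\<close> \<open>Y \<in> S\<close> show "det2 (rep X) (rep Y) dvd 1"
      by (metis Gamma_edge_row_class_iff)
  qed
  moreover have "S = row_class ` rep ` S" using rep by force
  ultimately show thesis using that by blast
qed

lemma Gamma_4clique_row_class_image:
  assumes card: "card R = 4" and units: "pairwise (\<lambda>p q. det2 p q dvd 1) R"
  shows "Gamma_4clique (row_class ` R)"
proof -
  have unimodular: "unimodular p" if "p \<in> R" for p
  proof -
    have "\<not> R \<subseteq> {p}"
    proof
      assume "R \<subseteq> {p}"
      then have "card R \<le> card {p}" by (rule card_mono[rotated]) simp
      with card show False by simp
    qed
    then obtain q where "q \<in> R" "q \<noteq> p" by blast
    then show ?thesis
      using pairwiseD[OF units that] unimodular_if_det2_unit by blast
  qed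
  have "card (row_class ` R) = 4" using card units by (simp add: card_image row_class_inj_on)
  moreover have "row_class ` R \<subseteq> Gamma_vertices"
    using unimodular row_class_in_Gamma_vertices by blast
  moreover have "Gamma_edge (row_class p) (row_class q)"
    if "p \<in> R" "q \<in> R" "row_class p \<noteq> row_class q" for p q
  proof -
    from that have "det2 p q dvd 1" using pairwiseD[OF units] by blast
    then show ?thesis by (simp add: Gamma_edge_row_class_iff unimodular that)
  qed
  ultimately show ?thesis unfolding Gamma_4clique_def by blast
qed

lemma exceptional_unit_if_det2_units:
  fixes p1 p2 p3 p4 :: "'a::comm_ring_1 \<times> 'a"
  assumes "det2 p1 p2 dvd 1" "det2 p3 p4 dvd 1" "det2 p1 p3 dvd 1" "det2 p2 p4 dvd 1"
    "det2 p1 p4 dvd 1" "det2 p2 p3 dvd 1"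
  shows "\<exists>u::'a. u dvd 1 \<and> (1 - u) dvd 1"
proof -
  have "det2 p1 p3 * det2 p2 p4 dvd 1" using assms(3,4) by (rule is_unit_mult)
  then obtain w where w: "det2 p1 p3 * det2 p2 p4 * w = 1" by (metis dvdE)
  then have "w dvd 1" by (metis dvd_triv_right)
  define u where "u = det2 p1 p4 * det2 p2 p3 * w"
  have "1 - u = (det2 p1 p3 * det2 p2 p4 - det2 p1 p4 * det2 p2 p3) * w"
    unfolding u_def left_diff_distrib w ..
  also have "\<dots> = det2 p1 p2 * det2 p3 p4 * w"
    by (simp only: det2_pluecker[of p1 p2 p3 p4])
  finally have "1 - u = det2 p1 p2 * det2 p3 p4 * w" .
  then have "u dvd 1 \<and> (1 - u) dvd 1"
    unfolding u_def using assms \<open>w dvd 1\<close> by (simp add: is_unit_mult)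
  then show ?thesis ..
qed

lemma exceptional_unit_if_pairwise_det2_units:
  fixes R :: "('a::comm_ring_1 \<times> 'a) set"
  assumes "card R = 4" "pairwise (\<lambda>p q. det2 p q dvd 1) R"
  shows "\<exists>u::'a. u dvd 1 \<and> (1 - u) dvd 1"
proof -
  from assms(1) obtain p1 p2 p3 p4 where R: "R = {p1, p2, p3, p4}" and dist: "distinct [p1, p2, p3, p4]"
    unfolding card_4_iff by blast
  have unit: "det2 p q dvd 1" if "p \<in> R" "q \<in> R" "p \<noteq> q" for p q
    using assms(2) that by (rule pairwiseD)
  show ?thesis
    by (rule exceptional_unit_if_det2_units[of p1 p2 p3 p4]) (rule unit; use R dist in simp)+
qed

theorem lemma2p9:
  shows "(\<exists>S :: ('a::comm_ring_1 \<times> 'a) set set. Gamma_4clique S) \<longleftrightarrow>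
         {u :: 'a. u dvd 1 \<and> (1 - u) dvd 1} \<noteq> {}"
proof
  assume "\<exists>S :: ('a \<times> 'a) set set. Gamma_4clique S"
  then obtain R :: "('a \<times> 'a) set" where "card R = 4" "pairwise (\<lambda>p q. det2 p q dvd 1) R"
    by (blast elim: Gamma_4clique_rowsE)
  then obtain u :: 'a where "u dvd 1" "(1 - u) dvd 1"
    using exceptional_unit_if_pairwise_det2_units by blast
  then show "{u :: 'a. u dvd 1 \<and> (1 - u) dvd 1} \<noteq> {}" by blast
next
  assume "{u :: 'a. u dvd 1 \<and> (1 - u) dvd 1} \<noteq> {}"
  then obtain u :: 'a where u: "u dvd 1" "(1 - u) dvd 1" by blast
  let ?R = "{(1, 0), (0, 1), (1, 1), (1, u)} :: ('a \<times> 'a) set"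
  from u have "u \<noteq> 0" "u \<noteq> 1" by auto
  then have "card ?R = 4" by simp
  moreover from u(2) have "(u - 1) dvd 1" by (metis minus_diff_eq minus_dvd_iff)
  with u have "pairwise (\<lambda>p q. det2 p q dvd 1) ?R"
    by (auto simp: pairwise_insert det2_def)
  ultimately have "Gamma_4clique (row_class ` ?R)" by (rule Gamma_4clique_row_class_image)
  then show "\<exists>S :: ('a \<times> 'a) set set. Gamma_4clique S" ..
qed

end
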